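(* Let $\mathscr{C}$ be a hereditary graph class closed under disjoint union, and let $\Pi$ be a $\rho$-local minimization problem which is cuttable for $\mathscr{C}$ with parameter $\beta>0$. Then for every integer $r\ge0$ and real $\alpha>0$, every deterministic LOCAL algorithm $\mathsf{A}$ with round complexity $r$ that does not require polynomial identifiers and is an $\alpha$-approximation for $\Pi$ on $\mathscr{C}$ is an $(r+1)$-uniform $\alpha\beta$-approximation for $\Pi$ on $\mathscr{C}$.
   Context: Hereditary: closed under vertex deletion. $N^t[S]$ is the set of vertices at distance at most $t$ from $S$. Deterministic LOCAL model: distinct positive integer identifiers, synchronous rounds of unbounded message exchange with neighbours and unbounded local computation; with round complexity $r$ the output of a vertex $v$ depends only on the vertices at distance at most $r$ from $v$, their identifiers, and the edges incident to them. "Does not require polynomial identifiers": guarantees hold for every assignment of distinct positive integer identifiers. $\mathsf{A}(G)$ is the output set. Problems: $\Pi$ (feasible solutions are vertex subsets) is $\rho$-local if there is a LOCAL verifier with round complexity $\rho$ which accepts at every vertex iff the given $S\subseteq V(G)$ is feasible; $S$ is feasible on $X$ if the verifier accepts at every vertex of $X$; $\mathrm{OPT}_\Pi(G,X)$ is the minimum size of a set feasible on $X$; $\mathrm{OPT}_\Pi(G)=\mathrm{OPT}_\Pi(G,V(G))$. $\Pi$ is cuttable for $\mathscr{C}$ with parameter $\beta$ if for all $G\in\mathscr{C}$ and $X\subseteq V(G)$ there is $Y$ with $X\subseteq Y\subseteq V(G)$ and $\mathrm{OPT}_\Pi(G[Y])\le\beta\,\mathrm{OPT}_\Pi(G,X)$.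 $\mathsf{A}$ is an $\alpha$-approximation on $\mathscr{C}$ if on each $G\in\mathscr{C}$ it outputs a feasible solution of size at most $\alpha\,\mathrm{OPT}_\Pi(G)$; it is a $k$-uniform $\gamma$-approximation if it outputs feasible solutions and $|\mathsf{A}(G)\cap S|\le\gamma\,\mathrm{OPT}_\Pi(G,N^k[S])$ for all $G\in\mathscr{C}$ and $S\subseteq V(G)$. *)

theory Defs
  imports Complex_Main
begin

text \<open>Graphs whose vertices are their (distinct, positive integer) identifiers.
  A graph is a pair (vertex set, edge set); edges are stored symmetrically.\<close>

type_synonym graph = "nat set \<times> (nat \<times> nat) set"

definition verts :: "graph \<Rightarrow> nat set" where "verts G = fst G"
definition edges :: "graph \<Rightarrow> (nat \<times> nat) set" where "edges G = snd G"

definition wf_graph :: "graph \<Rightarrow> bool" where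
  "wf_graph G \<longleftrightarrow> finite (verts G) \<and> 0 \<notin> verts G \<and>
     edges G \<subseteq> verts G \<times> verts G \<and> sym (edges G) \<and> irrefl (edges G)"

definition nbrs :: "graph \<Rightarrow> nat \<Rightarrow> nat set" where
  "nbrs G u = {w. (u, w) \<in> edges G}"

definition closed_nbhd :: "graph \<Rightarrow> nat \<Rightarrow> nat set \<Rightarrow> nat set" where
  "closed_nbhd G t S = {v \<in> verts G. \<exists>u\<in>S. \<exists>k\<le>t. (u, v) \<in> (edges G) ^^ k}"

definition induce :: "graph \<Rightarrow> nat set \<Rightarrow> graph" where
  "induce G Y = (verts G \<inter> Y, edges G \<inter> (Y \<times> Y))"

definition disj_union :: "graph \<Rightarrow> graph \<Rightarrow> graph" where
  "disj_union G H = (verts G \<union> verts H, edges G \<union> edges H)"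

definition graph_iso :: "graph \<Rightarrow> graph \<Rightarrow> bool" where
  "graph_iso G H \<longleftrightarrow> (\<exists>f. bij_betw f (verts G) (verts H) \<and>
     (\<forall>u\<in>verts G. \<forall>v\<in>verts G. (u, v) \<in> edges G \<longleftrightarrow> (f u, f v) \<in> edges H))"

text \<open>A graph class: a set of (identifier-labelled) graphs closed under isomorphism,
  i.e. membership does not depend on the identifier assignment.\<close>
definition graph_class :: "graph set \<Rightarrow> bool" where
  "graph_class C \<longleftrightarrow> (\<forall>G\<in>C. wf_graph G) \<and>
     (\<forall>G\<in>C. \<forall>H. wf_graph H \<and> graph_iso G H \<longrightarrow> H \<in> C)"

definition hereditary :: "graph set \<Rightarrow> bool" where
  "hereditary C \<longleftrightarrow> (\<forall>G\<in>C. \<forall>Y. induce G Y \<in> C)"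

definition closed_disj_union :: "graph set \<Rightarrow> bool" where
  "closed_disj_union C \<longleftrightarrow>
     (\<forall>G\<in>C. \<forall>H\<in>C. verts G \<inter> verts H = {} \<longrightarrow> disj_union G H \<in> C)"

text \<open>Two graphs give vertex v the same radius-r view: the same vertices at distance
  at most r (which are their identifiers), and the same edges incident to them.\<close>
definition same_view :: "nat \<Rightarrow> graph \<Rightarrow> graph \<Rightarrow> nat \<Rightarrow> bool" where
  "same_view r G H v \<longleftrightarrow> v \<in> verts G \<and> v \<in> verts H \<and>
     closed_nbhd G r {v} = closed_nbhd H r {v} \<and>
     (\<forall>u\<in>closed_nbhd G r {v}. nbrs G u = nbrs H u)"

definition local_alg :: "nat \<Rightarrow> (graph \<Rightarrow> nat set) \<Rightarrow> bool" where
  "local_alg r A \<longleftrightarrow>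
     (\<forall>G. wf_graph G \<longrightarrow> A G \<subseteq> verts G) \<and>
     (\<forall>G H v. wf_graph G \<and> wf_graph H \<and> same_view r G H v \<longrightarrow> (v \<in> A G \<longleftrightarrow> v \<in> A H))"

text \<open>LOCAL verifier with round complexity rho: input is the candidate set S (each vertex
  knows whether it is in S); output at v is accept/reject.\<close>
definition local_verifier :: "nat \<Rightarrow> (graph \<Rightarrow> nat set \<Rightarrow> nat \<Rightarrow> bool) \<Rightarrow> bool" where
  "local_verifier \<rho> ver \<longleftrightarrow>
     (\<forall>G H S T v. wf_graph G \<and> wf_graph H \<and> same_view \<rho> G H v \<and>
        S \<inter> closed_nbhd G \<rho> {v} = T \<inter> closed_nbhd H \<rho> {v} \<longrightarrow> (ver G S v \<longleftrightarrow> ver H T v))"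

text \<open>A problem is given by its verifier; S is feasible on X iff the verifier accepts
  at every vertex of X.\<close>
definition feasible_on :: "(graph \<Rightarrow> nat set \<Rightarrow> nat \<Rightarrow> bool) \<Rightarrow> graph \<Rightarrow> nat set \<Rightarrow> nat set \<Rightarrow> bool" where
  "feasible_on ver G X S \<longleftrightarrow> S \<subseteq> verts G \<and> (\<forall>v\<in>X. ver G S v)"

definition feasible :: "(graph \<Rightarrow> nat set \<Rightarrow> nat \<Rightarrow> bool) \<Rightarrow> graph \<Rightarrow> nat set \<Rightarrow> bool" where
  "feasible ver G S \<longleftrightarrow> feasible_on ver G (verts G) S"

definition OPT_on :: "(graph \<Rightarrow> nat set \<Rightarrow> nat \<Rightarrow> bool) \<Rightarrow> graph \<Rightarrow> nat set \<Rightarrow> nat" where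
  "OPT_on ver G X = (LEAST n. \<exists>S. feasible_on ver G X S \<and> card S = n)"

definition OPT :: "(graph \<Rightarrow> nat set \<Rightarrow> nat \<Rightarrow> bool) \<Rightarrow> graph \<Rightarrow> nat" where
  "OPT ver G = OPT_on ver G (verts G)"

definition cuttable :: "graph set \<Rightarrow> (graph \<Rightarrow> nat set \<Rightarrow> nat \<Rightarrow> bool) \<Rightarrow> real \<Rightarrow> bool" where
  "cuttable C ver \<beta> \<longleftrightarrow> (\<forall>G\<in>C. \<forall>X. X \<subseteq> verts G \<longrightarrow>
     (\<exists>Y. X \<subseteq> Y \<and> Y \<subseteq> verts G \<and> real (OPT ver (induce G Y)) \<le> \<beta> * real (OPT_on ver G X)))"

definition approx :: "graph set \<Rightarrow> (graph \<Rightarrow> nat set \<Rightarrow> nat \<Rightarrow> bool) \<Rightarrow> real \<Rightarrow> (graph \<Rightarrow> nat set) \<Rightarrow> bool" where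
  "approx C ver \<alpha> A \<longleftrightarrow> (\<forall>G\<in>C. feasible ver G (A G) \<and> real (card (A G)) \<le> \<alpha> * real (OPT ver G))"

definition uniform_approx :: "graph set \<Rightarrow> (graph \<Rightarrow> nat set \<Rightarrow> nat \<Rightarrow> bool) \<Rightarrow> nat \<Rightarrow> real \<Rightarrow> (graph \<Rightarrow> nat set) \<Rightarrow> bool" where
  "uniform_approx C ver k \<gamma> A \<longleftrightarrow> (\<forall>G\<in>C. feasible ver G (A G) \<and>
     (\<forall>S. S \<subseteq> verts G \<longrightarrow> real (card (A G \<inter> S)) \<le> \<gamma> * real (OPT_on ver G (closed_nbhd G k S))))"

end

theory Submission
  imports Defs
begin

text \<open>A LOCAL algorithm with round complexity r sees at a vertex v only the ball of radius r
  around v together with the edges leaving it, and all of this lies inside N^(r+1)[v].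
  Hence, whenever N^(r+1)[S] is contained in Y, the algorithm outputs on S the same in the
  induced subgraph G[Y] as in G. Choosing Y by cuttability for X = N^(r+1)[S] gives
  |A(G) \<inter> S| \<le> |A(G[Y])| \<le> \<alpha> OPT(G[Y]) \<le> \<alpha>\<beta> OPT(G, X).\<close>

lemma relpow_mono: "R \<subseteq> (S :: ('a \<times> 'a) set) \<Longrightarrow> R ^^ n \<subseteq> S ^^ n"
  by (induction n) (simp_all add: relcomp_mono)

lemma relpow_Restr_if_reachable_within:
  assumes "(v, w) \<in> E ^^ k"
    and "\<And>j x. j \<le> k \<Longrightarrow> (v, x) \<in> E ^^ j \<Longrightarrow> x \<in> Y"
  shows "(v, w) \<in> Restr E Y ^^ k"
  using assms
proof (induction k arbitrary: w)
  case 0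
  then show ?case by simp
next
  case (Suc k)
  then obtain x where vx: "(v, x) \<in> E ^^ k" and xw: "(x, w) \<in> E" by auto
  have "(v, x) \<in> Restr E Y ^^ k"
    using Suc.prems(2) by (intro Suc.IH[OF vx]) (meson le_SucI)
  moreover have "x \<in> Y" using Suc.prems(2)[of k x] vx by simp
  moreover have "w \<in> Y" using Suc.prems(2)[of "Suc k" w] Suc.prems(1) by simp
  ultimately show ?case using xw by auto
qed

lemma wf_graph_induce: "wf_graph G \<Longrightarrow> wf_graph (induce G Y)"
  by (auto simp: wf_graph_def induce_def verts_def edges_def sym_def irrefl_def)

lemma closed_nbhd_subset_verts: "closed_nbhd G t S \<subseteq> verts G"
  by (auto simp: closed_nbhd_def)

lemma closed_nbhd_mono_radius: "s \<le> t \<Longrightarrow> closed_nbhd G s S \<subseteq> closed_nbhd G t S"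
  unfolding closed_nbhd_def using order_trans by blast

lemma closed_nbhd_singleton_subset: "v \<in> S \<Longrightarrow> closed_nbhd G t {v} \<subseteq> closed_nbhd G t S"
  by (auto simp: closed_nbhd_def)

lemma relpow_edges_mem_closed_nbhd:
  assumes "wf_graph G" and "v \<in> verts G" and "(v, x) \<in> edges G ^^ j" and "j \<le> t"
  shows "x \<in> closed_nbhd G t {v}"
proof -
  have "x \<in> verts G"
  proof (cases j)
    case 0
    then show ?thesis using assms(2,3) by simp
  next
    case (Suc i)
    then show ?thesis using assms(1,3) by (auto simp: wf_graph_def)
  qed
  then show ?thesis using assms(3,4) by (auto simp: closed_nbhd_def)
qed

lemma nbrs_subset_closed_nbhd_Suc:
  assumes "wf_graph G" and "v \<in> verts G" and "u \<in> closed_nbhd G t {v}"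
  shows "nbrs G u \<subseteq> closed_nbhd G (Suc t) {v}"
proof
  fix w assume "w \<in> nbrs G u"
  moreover obtain k where "k \<le> t" and "(v, u) \<in> edges G ^^ k"
    using assms(3) by (auto simp: closed_nbhd_def)
  ultimately have "(v, w) \<in> edges G ^^ Suc k" and "Suc k \<le> Suc t"
    by (auto simp: nbrs_def)
  then show "w \<in> closed_nbhd G (Suc t) {v}"
    using relpow_edges_mem_closed_nbhd assms(1,2) by blast
qed

lemma closed_nbhd_induce:
  assumes "wf_graph G" and "v \<in> verts G" and "closed_nbhd G t {v} \<subseteq> Y"
  shows "closed_nbhd (induce G Y) t {v} = closed_nbhd G t {v}"
proof
  show "closed_nbhd (induce G Y) t {v} \<subseteq> closed_nbhd G t {v}"
    using relpow_mono[of "edges G \<inter> Y \<times> Y" "edges G"]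
    by (auto simp: closed_nbhd_def induce_def verts_def edges_def)
next
  have reach_Y: "x \<in> Y" if "j \<le> t" and "(v, x) \<in> edges G ^^ j" for j x
    using relpow_edges_mem_closed_nbhd[OF assms(1,2) that(2,1)] assms(3) by blast
  show "closed_nbhd G t {v} \<subseteq> closed_nbhd (induce G Y) t {v}"
  proof
    fix w assume "w \<in> closed_nbhd G t {v}"
    then obtain k where k: "k \<le> t" "(v, w) \<in> edges G ^^ k" "w \<in> verts G"
      by (auto simp: closed_nbhd_def)
    have "(v, w) \<in> (edges G \<inter> Y \<times> Y) ^^ k"
      by (rule relpow_Restr_if_reachable_within[OF k(2)]) (meson reach_Y k(1) order_trans)
    then show "w \<in> closed_nbhd (induce G Y) t {v}"
      using k reach_Y by (auto simp: closed_nbhd_def induce_def verts_def edges_def)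
  qed
qed

lemma nbrs_induce: "u \<in> Y \<Longrightarrow> nbrs G u \<subseteq> Y \<Longrightarrow> nbrs (induce G Y) u = nbrs G u"
  by (auto simp: nbrs_def induce_def edges_def)

lemma same_view_induce:
  assumes "wf_graph G" and "v \<in> verts G" and "closed_nbhd G (Suc r) {v} \<subseteq> Y"
  shows "same_view r G (induce G Y) v"
proof -
  have ball_Y: "closed_nbhd G r {v} \<subseteq> Y"
    using closed_nbhd_mono_radius[of r "Suc r" G "{v}"] assms(3) by simp
  have "v \<in> closed_nbhd G r {v}"
    using relpow_edges_mem_closed_nbhd[OF assms(1,2) relpow_0_I] by simp
  then have "v \<in> verts (induce G Y)"
    using ball_Y assms(2) by (auto simp: induce_def verts_def)
  moreover have "nbrs G u = nbrs (induce G Y) u" if "u \<in> closed_nbhd G r {v}" for u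
    using nbrs_induce nbrs_subset_closed_nbhd_Suc[OF assms(1,2) that] that ball_Y assms(3)
    by blast
  ultimately show ?thesis
    using assms(2) closed_nbhd_induce[OF assms(1,2) ball_Y] by (simp add: same_view_def)
qed

lemma local_alg_subset_verts: "local_alg r A \<Longrightarrow> wf_graph G \<Longrightarrow> A G \<subseteq> verts G"
  unfolding local_alg_def by blast

lemma local_alg_induce:
  assumes "local_alg r A" and "wf_graph G" and "closed_nbhd G (Suc r) S \<subseteq> Y"
  shows "A G \<inter> S \<subseteq> A (induce G Y)"
proof
  fix v assume v: "v \<in> A G \<inter> S"
  then have "v \<in> verts G" using local_alg_subset_verts[OF assms(1,2)] by blast
  moreover have "closed_nbhd G (Suc r) {v} \<subseteq> Y"
    using closed_nbhd_singleton_subset v assms(3) by blast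
  ultimately have "same_view r G (induce G Y) v"
    using same_view_induce assms(2) by blast
  then show "v \<in> A (induce G Y)"
    using assms(1) wf_graph_induce[OF assms(2)] assms(2) v unfolding local_alg_def by blast
qed

theorem mainTheorem10:
  fixes C :: "graph set" and ver :: "graph \<Rightarrow> nat set \<Rightarrow> nat \<Rightarrow> bool"
    and \<rho> r :: nat and \<alpha> \<beta> :: real and A :: "graph \<Rightarrow> nat set"
  assumes "graph_class C" and "hereditary C" and "closed_disj_union C"
    and "local_verifier \<rho> ver"
    and "\<beta> > 0" and "cuttable C ver \<beta>"
    and "\<alpha> > 0"
    and "local_alg r A" and "approx C ver \<alpha> A"
  shows "uniform_approx C ver (r + 1) (\<alpha> * \<beta>) A"
  unfolding uniform_approx_def
proof (intro ballI conjI allI impI)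
  fix G assume G: "G \<in> C"
  show "feasible ver G (A G)" using assms(9) G by (simp add: approx_def)
  fix S
  define X where "X = closed_nbhd G (Suc r) S"
  have "X \<subseteq> verts G" unfolding X_def by (rule closed_nbhd_subset_verts)
  then obtain Y where "X \<subseteq> Y" and Y_cut: "real (OPT ver (induce G Y)) \<le> \<beta> * real (OPT_on ver G X)"
    using assms(6)[unfolded cuttable_def, rule_format, OF G] by blast
  have wf: "wf_graph G" using assms(1) G by (simp add: graph_class_def)
  have GY: "induce G Y \<in> C" using assms(2) G by (simp add: hereditary_def)
  have "finite (A (induce G Y))"
    using local_alg_subset_verts[OF assms(8) wf_graph_induce[OF wf]] wf_graph_induce[OF wf]
    by (auto simp: wf_graph_def intro: finite_subset)
  then have "card (A G \<inter> S) \<le> card (A (induce G Y))"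
    using card_mono local_alg_induce[OF assms(8) wf \<open>X \<subseteq> Y\<close>[unfolded X_def]] by blast
  also have "real \<dots> \<le> \<alpha> * real (OPT ver (induce G Y))"
    using assms(9) GY by (simp add: approx_def)
  also have "\<dots> \<le> \<alpha> * \<beta> * real (OPT_on ver G X)"
    using Y_cut assms(7) by simp
  finally show "real (card (A G \<inter> S)) \<le> \<alpha> * \<beta> * real (OPT_on ver G (closed_nbhd G (r + 1) S))"
    by (simp add: X_def)
qed

end
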